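(* Let $G$ and $H$ be nontrivial finite groups. The cyclic graph $\Delta(G\times H)$ is disconnected if and only if there is a prime $p$ and an element $x\in G\times H$ of order $p$ whose centralizer $C_{G\times H}(x)$ is a $p$-group.
   Context: For a finite group $X$, the cyclic graph $\Delta(X)$ has vertex set $X^{\#}=X\setminus\{1\}$, and distinct vertices $x,y$ are adjacent if and only if the subgroup $\langle x,y\rangle$ is cyclic. *)

theory Defs
  imports "HOL-Algebra.Algebra"
begin

definition cyc_vertices :: "('a, 'b) monoid_scheme \<Rightarrow> 'a set" where
  "cyc_vertices M = carrier M - {one M}"

definition cyc_adj :: "('a, 'b) monoid_scheme \<Rightarrow> 'a \<Rightarrow> 'a \<Rightarrow> bool" where
  "cyc_adj M x y \<longleftrightarrow> x \<in> cyc_vertices M \<and> y \<in> cyc_vertices M \<and> x \<noteq> y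
     \<and> cyclic_group (subgroup_generated M {x, y})"

definition cyc_graph_connected :: "('a, 'b) monoid_scheme \<Rightarrow> bool" where
  "cyc_graph_connected M \<longleftrightarrow>
     (\<forall>x \<in> cyc_vertices M. \<forall>y \<in> cyc_vertices M. (cyc_adj M)\<^sup>*\<^sup>* x y)"

definition centralizer_of :: "('a, 'b) monoid_scheme \<Rightarrow> 'a \<Rightarrow> 'a set" where
  "centralizer_of M x = {y \<in> carrier M. y \<otimes>\<^bsub>M\<^esub> x = x \<otimes>\<^bsub>M\<^esub> y}"

definition is_p_group :: "nat \<Rightarrow> 'a set \<Rightarrow> bool" where
  "is_p_group p S \<longleftrightarrow> finite S \<and> (\<exists>k::nat. card S = p ^ k)"

end

theory Submission
  imports Defs
begin

(* Suppose x has prime order p and C(x) is a p-group. If x lies in <y> and y is adjacent to z,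
   then <y, z> = <c> contains x, so c centralizes x and <c> is a cyclic p-group; its subgroup of
   order p lies in every nontrivial subgroup, hence x lies in <z>. So x lies in <z> for every z
   in its component, and a nontrivial element of one factor, chosen so that its cyclic subgroup
   misses x, is out of reach.
   Conversely, suppose every element of prime order p centralizes an element of another prime
   order; projecting, this element may be taken in one of the two factors. Commuting elements of
   distinct prime orders are adjacent, and every vertex is joined to one of its powers of prime
   order, hence to an element of prime order in a factor. Elements (a, 1) and (1, b) of prime
   order are adjacent if their orders differ, and otherwise both adjacent to a factor element
   centralizing (a, b); so all these lie in one component. *)

lemma (in group) cyclic_subgroup_generated_iff:
  assumes "S \<subseteq> carrier G"
  shows "cyclic_group (subgroup_generated G S) \<longleftrightarrow> (\<exists>c\<in>carrier G. generate G S = generate G {c})"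
proof -
  let ?S = "subgroup_generated G S"
  have carrier_S: "carrier ?S = generate G S"
    using assms by (simp add: carrier_subgroup_generated Int_absorb1)
  have powers: "range (\<lambda>n::int. c [^]\<^bsub>?S\<^esub> n) = generate G {c}"
    if "c \<in> carrier ?S" for c
  proof -
    have "c \<in> carrier G" using that carrier_S generate_incl assms by blast
    then show ?thesis using that int_pow_subgroup_generated generate_pow by auto
  qed
  show ?thesis
  proof
    assume "cyclic_group ?S"
    then obtain c where c: "c \<in> carrier ?S" "carrier ?S = range (\<lambda>n::int. c [^]\<^bsub>?S\<^esub> n)"
      using group.cyclic_group[OF group_subgroup_generated] by blast
    have "c \<in> carrier G"
      using c(1) carrier_S generate_incl[OF assms] by blast
    moreover have "generate G S = generate G {c}"
      using c powers carrier_S by simp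
    ultimately show "\<exists>c\<in>carrier G. generate G S = generate G {c}" by blast
  next
    assume "\<exists>c\<in>carrier G. generate G S = generate G {c}"
    then obtain c where "generate G S = generate G {c}" by blast
    then have c: "c \<in> carrier ?S"
      using carrier_S generate.incl[of c "{c}"] by auto
    then have "carrier ?S = range (\<lambda>n::int. c [^]\<^bsub>?S\<^esub> n)"
      using powers carrier_S \<open>generate G S = generate G {c}\<close> by simp
    then show "cyclic_group ?S"
      using group.cyclic_group[OF group_subgroup_generated] c by blast
  qed
qed

lemma (in group) cyc_adj_iff:
  "cyc_adj G x y \<longleftrightarrow> x \<in> cyc_vertices G \<and> y \<in> cyc_vertices G \<and> x \<noteq> y
     \<and> (\<exists>c\<in>carrier G. generate G {x, y} = generate G {c})"
  unfolding cyc_adj_def cyc_vertices_def using cyclic_subgroup_generated_iff[of "{x, y}"] by auto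

lemma (in group) cyc_connected_sym:
  "(cyc_adj G)\<^sup>*\<^sup>* x y \<Longrightarrow> (cyc_adj G)\<^sup>*\<^sup>* y x"
  by (rule sympD[OF symp_rtranclp]) (auto intro: sympI simp: cyc_adj_def insert_commute)

lemma (in group) generate_pair_eq_singleton:
  assumes "x \<in> carrier G" "z \<in> carrier G" "c \<in> generate G {x, z}"
    and "x \<in> generate G {c}" "z \<in> generate G {c}"
  shows "generate G {x, z} = generate G {c}"
proof
  have "c \<in> carrier G" using assms generate_incl[of "{x, z}"] by auto
  then show "generate G {x, z} \<subseteq> generate G {c}"
    using assms by (intro generate_subgroup_incl generate_is_subgroup) auto
  show "generate G {c} \<subseteq> generate G {x, z}"
    using assms by (intro generate_subgroup_incl generate_is_subgroup) auto
qed

lemma (in group) cyc_adj_if_in_generate: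
  assumes "v \<in> cyc_vertices G" "w \<in> cyc_vertices G" "v \<noteq> w" "w \<in> generate G {v}"
  shows "cyc_adj G v w"
proof -
  have "v \<in> carrier G" "w \<in> carrier G" using assms(1,2) by (auto simp: cyc_vertices_def)
  then have "generate G {v, w} = generate G {v}"
    using assms(4) by (intro generate_pair_eq_singleton) (auto intro: generate.incl)
  then show ?thesis using assms \<open>v \<in> carrier G\<close> by (auto simp: cyc_adj_iff)
qed

lemma (in group) cyc_adj_if_commute_coprime:
  assumes x: "x \<in> carrier G" and z: "z \<in> carrier G" and comm: "x \<otimes> z = z \<otimes> x"
    and coprime: "coprime (ord x) (ord z)" and "x \<noteq> \<one>" "z \<noteq> \<one>"
  shows "cyc_adj G x z"
proof -
  \<comment> \<open>With i ord a + j ord b = 1, the exponent j ord b kills b and fixes a.\<close>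
  have bezout_power: "(a \<otimes> b) [^] (j * int (ord b)) = a"
    if a: "a \<in> carrier G" and b: "b \<in> carrier G" and "a \<otimes> b = b \<otimes> a"
      and bezout: "i * int (ord a) + j * int (ord b) = 1" for a b i j
  proof -
    have "a [^] (j * int (ord b)) = a [^] (1::int)"
      using int_pow_eq[OF a] bezout by (metis add_diff_cancel_right' dvd_triv_right mult.commute)
    then show ?thesis
      using int_pow_mult_distrib[OF \<open>a \<otimes> b = b \<otimes> a\<close> a b] int_pow_eq_id[OF b] a b by simp
  qed
  obtain i j :: int where bezout: "i * int (ord x) + j * int (ord z) = 1"
    using bezout_int[of "int (ord x)" "int (ord z)"] coprime
    by (metis coprime_iff_gcd_eq_1 gcd_int_int_eq of_nat_1)
  have "x \<noteq> z"
    using coprime \<open>x \<noteq> \<one>\<close> ord_eq_1[OF x] by auto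
  have "j * int (ord z) + i * int (ord x) = 1"
    using bezout by linarith
  then have "x = (x \<otimes> z) [^] (j * int (ord z))" "z = (x \<otimes> z) [^] (i * int (ord x))"
    using bezout_power[OF x z comm bezout] bezout_power[OF z x comm[symmetric]] by (simp_all only: comm)
  then have "x \<in> generate G {x \<otimes> z}" "z \<in> generate G {x \<otimes> z}"
    using x z by (auto simp: generate_pow intro: range_eqI)
  moreover have "x \<otimes> z \<in> generate G {x, z}"
    using generate.eng[OF generate.incl generate.incl, of x "{x, z}" z G] by simp
  ultimately have "generate G {x, z} = generate G {x \<otimes> z}"
    using x z by (intro generate_pair_eq_singleton)
  moreover have "x \<in> cyc_vertices G" "z \<in> cyc_vertices G"
    using x z \<open>x \<noteq> \<one>\<close> \<open>z \<noteq> \<one>\<close> by (simp_all add: cyc_vertices_def)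
  ultimately show ?thesis
    unfolding cyc_adj_iff using \<open>x \<noteq> z\<close> m_closed[OF x z] by (intro conjI bexI) assumption+
qed

lemma (in group) prime_ord_ne_one: "Factorial_Ring.prime (ord x) \<Longrightarrow> x \<noteq> \<one>"
  by auto

lemma (in group) cyc_adj_if_commute_distinct_prime_orders:
  assumes "x \<in> carrier G" "z \<in> carrier G" "x \<otimes> z = z \<otimes> x"
    and "Factorial_Ring.prime (ord x)" "Factorial_Ring.prime (ord z)" "ord x \<noteq> ord z"
  shows "cyc_adj G x z"
proof (rule cyc_adj_if_commute_coprime)
  show "coprime (ord x) (ord z)" using assms primes_coprime by blast
  show "x \<noteq> \<one>" "z \<noteq> \<one>" using assms(4,5) by (simp_all add: prime_ord_ne_one)
qed (use assms(1-3) in auto)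

lemma (in group) cyc_connected_to_prime_order:
  assumes fin: "finite (carrier G)" and v: "v \<in> carrier G" "v \<noteq> \<one>"
  shows "\<exists>x\<in>carrier G. Factorial_Ring.prime (ord x) \<and> (cyc_adj G)\<^sup>*\<^sup>* v x"
proof -
  have "ord v \<noteq> 1" using ord_eq_1 v by simp
  then obtain p where p: "Factorial_Ring.prime p" "p dvd ord v"
    using prime_factor_nat by blast
  then obtain k where k: "ord v = p * k" by (elim dvdE)
  have "k \<noteq> 0" using ord_ge_1[OF fin v(1)] k by (intro notI) simp
  define x where "x = v [^] k"
  have x: "x \<in> carrier G" "ord x = p"
    using v(1) ord_pow[OF v(1), of k] k \<open>k \<noteq> 0\<close> by (simp_all add: x_def)
  have "x \<noteq> \<one>" using x(2) p(1) by (simp add: prime_ord_ne_one)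
  have "x = v [^] int k" by (simp add: x_def int_pow_int)
  then have "x \<in> generate G {v}"
    unfolding generate_pow[OF v(1)] by blast
  then have "(cyc_adj G)\<^sup>*\<^sup>* v x"
  proof (cases "x = v")
    case False
    then show ?thesis
      using cyc_adj_if_in_generate[of v x] v x(1) \<open>x \<noteq> \<one>\<close> \<open>x \<in> generate G {v}\<close>
      by (simp add: cyc_vertices_def)
  qed simp
  then show ?thesis using x p by blast
qed

lemma (in group) ord_subgroup:
  assumes "subgroup K G" "y \<in> K"
  shows "group.ord (G\<lparr>carrier := K\<rparr>) y = ord y"
  using assms by (simp add: group.ord_def[OF subgroup_imp_group[OF assms(1)]] ord_def nat_pow_def)

lemma (in group) ord_dvd_card_subgroup:
  assumes "finite (carrier G)" "subgroup K G" "y \<in> K"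
  shows "ord y dvd card K"
  using group.ord_dvd_group_order[OF subgroup_imp_group[OF assms(2)], of y] assms
  by (simp add: ord_subgroup order_def)

lemma (in group) cauchy_theorem:
  assumes fin: "finite (carrier G)" and p: "Factorial_Ring.prime p" "p dvd order G"
  shows "\<exists>x\<in>carrier G. ord x = p"
proof -
  obtain m where "order G = p ^ 1 * m" using p by auto
  then obtain Q where Q: "subgroup Q G" "card Q = p"
    using sylow_thm[OF p(1) is_group _ fin, of 1 m] by auto
  have "Q \<noteq> {\<one>}" using Q p(1) not_prime_1 by auto
  then obtain x where x: "x \<in> Q" "x \<noteq> \<one>"
    using subgroup.one_closed[OF Q(1)] by blast
  have "x \<in> carrier G" using x Q subgroup.subset by blast
  then have "ord x \<noteq> 1" using x ord_eq_1 by auto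
  moreover have "ord x dvd p" using ord_dvd_card_subgroup[OF fin Q(1) x(1)] Q by simp
  ultimately have "ord x = p" using p(1) by (auto simp: prime_nat_iff)
  then show ?thesis using \<open>x \<in> carrier G\<close> by blast
qed

lemma (in group) subgroup_centralizer_of:
  assumes x: "x \<in> carrier G"
  shows "subgroup (centralizer_of G x) G"
proof (rule subgroupI)
  show "centralizer_of G x \<subseteq> carrier G" "centralizer_of G x \<noteq> {}"
    using x by (auto simp: centralizer_of_def)
next
  fix a assume "a \<in> centralizer_of G x"
  then have a: "a \<in> carrier G" "a \<otimes> x = x \<otimes> a" by (auto simp: centralizer_of_def)
  have "inv a \<otimes> x = inv a \<otimes> (x \<otimes> a) \<otimes> inv a"
    using a x by (simp add: m_assoc)
  also have "\<dots> = x \<otimes> inv a"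
    using a x by (simp flip: a(2) add: m_assoc[symmetric])
  finally show "inv a \<in> centralizer_of G x"
    using a by (simp add: centralizer_of_def)
next
  fix a b assume "a \<in> centralizer_of G x" "b \<in> centralizer_of G x"
  then have a: "a \<in> carrier G" "a \<otimes> x = x \<otimes> a" and b: "b \<in> carrier G" "b \<otimes> x = x \<otimes> b"
    by (auto simp: centralizer_of_def)
  have "a \<otimes> b \<otimes> x = a \<otimes> (x \<otimes> b)"
    using a b x by (simp add: m_assoc flip: b(2))
  also have "\<dots> = x \<otimes> (a \<otimes> b)"
    using a b x by (simp add: a(2) flip: m_assoc)
  finally show "a \<otimes> b \<in> centralizer_of G x"
    using a b by (simp add: centralizer_of_def)
qed

lemma (in group) exists_other_prime_order_in_subgroup:
  assumes fin: "finite (carrier G)" and K: "subgroup K G"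
    and p: "Factorial_Ring.prime p" and not_p_group: "\<not> is_p_group p K"
  shows "\<exists>y\<in>K. Factorial_Ring.prime (ord y) \<and> ord y \<noteq> p"
proof -
  have "finite K" using fin K subgroup.subset finite_subset by blast
  then have "card K \<noteq> 0" using subgroup.one_closed[OF K] by auto
  then obtain r where r: "r \<in> prime_factors (card K)" "r \<noteq> p"
    using Ex_other_prime_factor[of "card K" p] not_p_group \<open>finite K\<close> p
    by (auto simp: is_p_group_def)
  interpret K: group "G\<lparr>carrier := K\<rparr>" using subgroup_imp_group[OF K] .
  obtain y where "y \<in> K" "K.ord y = r"
    using K.cauchy_theorem[of r] r \<open>finite K\<close> by (auto simp: order_def)
  then show ?thesis using r ord_subgroup[OF K] by auto
qed

lemma primepow_congruence_solvable:
  fixes a b n :: nat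
  assumes p: "Factorial_Ring.prime p" and "p ^ n dvd a" and b: "\<not> p ^ Suc n dvd b"
  shows "\<exists>s t. b * s = p ^ Suc n * t + a"
proof -
  obtain e where e: "e \<le> Suc n" "gcd b (p ^ Suc n) = p ^ e"
    using divides_primepow_nat[OF p, of "gcd b (p ^ Suc n)" "Suc n"] by auto
  then have "e \<le> n" using b gcd_dvd1[of b "p ^ Suc n"] by (cases "e = Suc n") auto
  then have "p ^ e dvd p ^ n" by (simp add: le_imp_power_dvd)
  then have "gcd b (p ^ Suc n) dvd a"
    unfolding e(2) using \<open>p ^ n dvd a\<close> by (rule dvd_trans)
  then obtain k where k: "a = gcd b (p ^ Suc n) * k" by (elim dvdE)
  have "b \<noteq> 0" using b by (intro notI) simp
  then obtain s t where st: "b * s = p ^ Suc n * t + gcd b (p ^ Suc n)"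
    using bezout_nat by blast
  have "b * (s * k) = (p ^ Suc n * t + gcd b (p ^ Suc n)) * k"
    by (simp only: mult.assoc[symmetric] st)
  also have "\<dots> = p ^ Suc n * (t * k) + a"
    using k by (simp add: algebra_simps)
  finally show ?thesis by blast
qed

lemma (in group) prime_order_in_generate_primepow:
  assumes c: "c \<in> carrier G" and ord_c: "ord c = p ^ m" and p: "Factorial_Ring.prime p"
    and x: "x \<in> generate G {c}" "ord x = p" and z: "z \<in> generate G {c}" "z \<noteq> \<one>"
  shows "x \<in> generate G {z}"
proof -
  have "ord c \<noteq> 0" using ord_c p by (simp add: prime_gt_0_nat)
  then obtain a b :: nat where a: "x = c [^] a" and b: "z = c [^] b"
    using x z generate_pow_nat[OF c] by auto
  have "m \<noteq> 0"
  proof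
    assume "m = 0"
    then have "c = \<one>" using ord_c ord_eq_1[OF c] by simp
    then have "x = \<one>" using a by simp
    then show False using prime_ord_ne_one x(2) p by blast
  qed
  then obtain n where m: "m = Suc n" using not0_implies_Suc by blast
  have "x \<in> carrier G" using a c by simp
  then have "x [^] p = \<one>"
    using pow_ord_eq_1[of x] x(2) by simp
  then have "c [^] (a * p) = \<one>"
    using a c by (simp add: nat_pow_pow)
  then have "p * p ^ n dvd a * p"
    using pow_eq_id[OF c] ord_c m by simp
  then have "p ^ n dvd a" using p by (simp add: prime_gt_0_nat mult.commute[of p])
  moreover have "\<not> p ^ Suc n dvd b" using z(2) b pow_eq_id[OF c] ord_c m by simp
  ultimately obtain s t where st: "b * s = p ^ m * t + a"
    using primepow_congruence_solvable[OF p] m by blast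
  have "z [^] s = (c [^] ord c) [^] t \<otimes> c [^] a"
    using b c ord_c by (simp add: nat_pow_pow nat_pow_mult st)
  then have "x = z [^] int s" using a c by (simp add: int_pow_int)
  then show ?thesis using b c generate_pow[of z] by auto
qed

lemma (in group) commute_if_in_generate_singleton:
  assumes "c \<in> carrier G" "x \<in> generate G {c}"
  shows "c \<otimes> x = x \<otimes> c"
proof -
  obtain i where "x = c [^] (i::int)"
    using assms generate_pow by auto
  then show ?thesis
    using int_pow_mult[OF assms(1), of 1 i] int_pow_mult[OF assms(1), of i 1] assms(1)
    by (simp add: add.commute)
qed

lemma (in group) in_generate_if_cyc_connected:
  assumes fin: "finite (carrier G)" and x: "x \<in> carrier G" "ord x = p"
    and p: "Factorial_Ring.prime p" and p_group: "is_p_group p (centralizer_of G x)"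
    and path: "(cyc_adj G)\<^sup>*\<^sup>* x z"
  shows "x \<in> generate G {z}"
  using path
proof (induction rule: rtranclp_induct)
  case base
  show ?case by (simp add: generate.incl)
next
  case (step y z)
  then have "z \<noteq> \<one>" by (simp add: cyc_adj_def cyc_vertices_def)
  obtain c where c: "c \<in> carrier G" "generate G {y, z} = generate G {c}"
    using step(2) by (auto simp: cyc_adj_iff)
  have "x \<in> generate G {c}"
    using step.IH mono_generate[of "{y}" "{y, z}"] c(2) by auto
  have "z \<in> generate G {c}"
    using c(2) generate.incl[of z "{y, z}"] by auto
  have "c \<in> centralizer_of G x"
    using commute_if_in_generate_singleton[OF c(1) \<open>x \<in> generate G {c}\<close>] c(1)
    by (simp add: centralizer_of_def)
  moreover obtain k where "card (centralizer_of G x) = p ^ k"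
    using p_group by (auto simp: is_p_group_def)
  ultimately have "ord c dvd p ^ k"
    using ord_dvd_card_subgroup[OF fin subgroup_centralizer_of[OF x(1)]] by simp
  then obtain m where "ord c = p ^ m" using divides_primepow_nat[OF p] by blast
  then show ?case
    using prime_order_in_generate_primepow[OF c(1) _ p \<open>x \<in> generate G {c}\<close> x(2)
        \<open>z \<in> generate G {c}\<close> \<open>z \<noteq> \<one>\<close>] by blast
qed

lemma pow_DirProd: "(a, b) [^]\<^bsub>G \<times>\<times> H\<^esub> (n::nat) = (a [^]\<^bsub>G\<^esub> n, b [^]\<^bsub>H\<^esub> n)"
  by (induction n) auto

locale group_pair = G: group G + H: group H
  for G :: "('a, 'c) monoid_scheme" and H :: "('b, 'd) monoid_scheme"
begin

sublocale GH: group "G \<times>\<times> H"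
  using DirProd_group G.is_group H.is_group by blast

lemma ord_DirProd:
  assumes "a \<in> carrier G" "b \<in> carrier H"
  shows "GH.ord (a, b) = lcm (G.ord a) (H.ord b)"
  using assms by (simp add: GH.ord_unique pow_DirProd G.pow_eq_id H.pow_eq_id)

definition factor_elems :: "('a \<times> 'b) set" where
  "factor_elems = carrier G \<times> {\<one>\<^bsub>H\<^esub>} \<union> {\<one>\<^bsub>G\<^esub>} \<times> carrier H"

lemma factor_elem_commutes_with_components:
  assumes "y \<in> factor_elems" "a \<in> carrier G" "b \<in> carrier H"
    and "y \<otimes>\<^bsub>G \<times>\<times> H\<^esub> (a, b) = (a, b) \<otimes>\<^bsub>G \<times>\<times> H\<^esub> y"
  shows "y \<otimes>\<^bsub>G \<times>\<times> H\<^esub> (a, \<one>\<^bsub>H\<^esub>) = (a, \<one>\<^bsub>H\<^esub>) \<otimes>\<^bsub>G \<times>\<times> H\<^esub> y"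
    and "y \<otimes>\<^bsub>G \<times>\<times> H\<^esub> (\<one>\<^bsub>G\<^esub>, b) = (\<one>\<^bsub>G\<^esub>, b) \<otimes>\<^bsub>G \<times>\<times> H\<^esub> y"
  using assms by (auto simp: factor_elems_def)

lemma centralizer_prime_order_factor_elem:
  assumes x: "x \<in> carrier (G \<times>\<times> H)" and y: "y \<in> centralizer_of (G \<times>\<times> H) x"
    and prime: "Factorial_Ring.prime (GH.ord y)"
  shows "\<exists>z \<in> centralizer_of (G \<times>\<times> H) x \<inter> factor_elems. GH.ord z = GH.ord y"
proof -
  obtain c d g h where cd: "y = (c, d)" and gh: "x = (g, h)" by fastforce
  have c: "c \<in> carrier G" "c \<otimes>\<^bsub>G\<^esub> g = g \<otimes>\<^bsub>G\<^esub> c"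
    and d: "d \<in> carrier H" "d \<otimes>\<^bsub>H\<^esub> h = h \<otimes>\<^bsub>H\<^esub> d"
    using y unfolding cd gh centralizer_of_def by auto
  have g: "g \<in> carrier G" and h: "h \<in> carrier H" using x gh by auto
  have lcm: "lcm (G.ord c) (H.ord d) = GH.ord y"
    using ord_DirProd[OF c(1) d(1)] cd by simp
  then have "G.ord c dvd GH.ord y" "H.ord d dvd GH.ord y" by (simp_all flip: lcm)
  then have "G.ord c = 1 \<or> G.ord c = GH.ord y" "H.ord d = 1 \<or> H.ord d = GH.ord y"
    using prime by (auto simp: prime_nat_iff)
  then consider "G.ord c = GH.ord y" | "H.ord d = GH.ord y"
    using lcm prime by fastforce
  then show ?thesis
  proof cases
    case 1
    have "(c, \<one>\<^bsub>H\<^esub>) \<in> centralizer_of (G \<times>\<times> H) x \<inter> factor_elems"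
      using c h unfolding gh centralizer_of_def factor_elems_def by simp
    moreover have "GH.ord (c, \<one>\<^bsub>H\<^esub>) = GH.ord y"
      using ord_DirProd[OF c(1) H.one_closed] 1 by simp
    ultimately show ?thesis by blast
  next
    case 2
    have "(\<one>\<^bsub>G\<^esub>, d) \<in> centralizer_of (G \<times>\<times> H) x \<inter> factor_elems"
      using d g unfolding gh centralizer_of_def factor_elems_def by simp
    moreover have "GH.ord (\<one>\<^bsub>G\<^esub>, d) = GH.ord y"
      using ord_DirProd[OF G.one_closed d(1)] 2 by simp
    ultimately show ?thesis by blast
  qed
qed

lemma exists_vertex_not_generating:
  assumes nontrivial: "carrier G \<noteq> {\<one>\<^bsub>G\<^esub>}" "carrier H \<noteq> {\<one>\<^bsub>H\<^esub>}"
    and x: "x \<in> carrier (G \<times>\<times> H)" "x \<noteq> \<one>\<^bsub>G \<times>\<times> H\<^esub>"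
  obtains w where "w \<in> cyc_vertices (G \<times>\<times> H)" "x \<notin> generate (G \<times>\<times> H) {w}"
proof -
  obtain g h where gh: "x = (g, h)" by fastforce
  show ?thesis
  proof (cases "g = \<one>\<^bsub>G\<^esub>")
    case True
    obtain a where a: "a \<in> carrier G" "a \<noteq> \<one>\<^bsub>G\<^esub>" using nontrivial(1) G.one_closed by blast
    have "subgroup (carrier G \<times> {\<one>\<^bsub>H\<^esub>}) (G \<times>\<times> H)"
      by (rule DirProd_subgroups[OF G.is_group G.subgroup_self H.is_group H.triv_subgroup])
    then have "generate (G \<times>\<times> H) {(a, \<one>\<^bsub>H\<^esub>)} \<subseteq> carrier G \<times> {\<one>\<^bsub>H\<^esub>}"
      using a(1) by (intro GH.generate_subgroup_incl) auto
    moreover have "x \<notin> carrier G \<times> {\<one>\<^bsub>H\<^esub>}"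
      using x(2) True gh by auto
    ultimately show ?thesis
      using that[of "(a, \<one>\<^bsub>H\<^esub>)"] a by (auto simp: cyc_vertices_def)
  next
    case False
    obtain b where b: "b \<in> carrier H" "b \<noteq> \<one>\<^bsub>H\<^esub>" using nontrivial(2) H.one_closed by blast
    have "subgroup ({\<one>\<^bsub>G\<^esub>} \<times> carrier H) (G \<times>\<times> H)"
      by (rule DirProd_subgroups[OF G.is_group G.triv_subgroup H.is_group H.subgroup_self])
    then have "generate (G \<times>\<times> H) {(\<one>\<^bsub>G\<^esub>, b)} \<subseteq> {\<one>\<^bsub>G\<^esub>} \<times> carrier H"
      using b(1) by (intro GH.generate_subgroup_incl) auto
    moreover have "x \<notin> {\<one>\<^bsub>G\<^esub>} \<times> carrier H"
      using False gh by auto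
    ultimately show ?thesis
      using that[of "(\<one>\<^bsub>G\<^esub>, b)"] b by (auto simp: cyc_vertices_def)
  qed
qed

context
  assumes fin_G: "finite (carrier G)" and fin_H: "finite (carrier H)"
begin

lemma finite_carrier_DirProd: "finite (carrier (G \<times>\<times> H))"
  using fin_G fin_H by simp

lemma not_connected_if_p_centralizer:
  assumes nontrivial: "carrier G \<noteq> {\<one>\<^bsub>G\<^esub>}" "carrier H \<noteq> {\<one>\<^bsub>H\<^esub>}"
    and p: "Factorial_Ring.prime p" and x: "x \<in> carrier (G \<times>\<times> H)" "GH.ord x = p"
    and p_group: "is_p_group p (centralizer_of (G \<times>\<times> H) x)"
  shows "\<not> cyc_graph_connected (G \<times>\<times> H)"
proof -
  have "x \<noteq> \<one>\<^bsub>G \<times>\<times> H\<^esub>" using x(2) p by (intro GH.prime_ord_ne_one) simp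
  then obtain w where w: "w \<in> cyc_vertices (G \<times>\<times> H)" "x \<notin> generate (G \<times>\<times> H) {w}"
    using exists_vertex_not_generating[OF nontrivial x(1)] by blast
  then have "\<not> (cyc_adj (G \<times>\<times> H))\<^sup>*\<^sup>* x w"
    using GH.in_generate_if_cyc_connected[OF finite_carrier_DirProd x p p_group] by blast
  moreover have "x \<in> cyc_vertices (G \<times>\<times> H)"
    using x(1) \<open>x \<noteq> \<one>\<^bsub>G \<times>\<times> H\<^esub>\<close> by (simp add: cyc_vertices_def)
  ultimately show ?thesis
    using w(1) by (auto simp: cyc_graph_connected_def)
qed

context
  assumes no_p_centralizer: "\<And>p x. Factorial_Ring.prime p \<Longrightarrow> x \<in> carrier (G \<times>\<times> H)
    \<Longrightarrow> GH.ord x = p \<Longrightarrow> \<not> is_p_group p (centralizer_of (G \<times>\<times> H) x)"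
begin

lemma prime_order_commutes_with_factor_elem:
  assumes x: "x \<in> carrier (G \<times>\<times> H)" and prime: "Factorial_Ring.prime (GH.ord x)"
  obtains y where "y \<in> factor_elems" "y \<otimes>\<^bsub>G \<times>\<times> H\<^esub> x = x \<otimes>\<^bsub>G \<times>\<times> H\<^esub> y"
    "Factorial_Ring.prime (GH.ord y)" "GH.ord y \<noteq> GH.ord x"
proof -
  obtain y where "y \<in> centralizer_of (G \<times>\<times> H) x" "Factorial_Ring.prime (GH.ord y)"
      "GH.ord y \<noteq> GH.ord x"
    using GH.exists_other_prime_order_in_subgroup[OF finite_carrier_DirProd
        GH.subgroup_centralizer_of[OF x] prime no_p_centralizer[OF prime x refl]]
    by blast
  then obtain z where "z \<in> centralizer_of (G \<times>\<times> H) x" "z \<in> factor_elems" "GH.ord z = GH.ord y"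
    using centralizer_prime_order_factor_elem[OF x] by blast
  then show ?thesis
    using that[of z] \<open>Factorial_Ring.prime (GH.ord y)\<close> \<open>GH.ord y \<noteq> GH.ord x\<close>
    by (simp add: centralizer_of_def)
qed

lemma cross_factor_connected:
  assumes a: "a \<in> carrier G" "Factorial_Ring.prime (G.ord a)"
    and b: "b \<in> carrier H" "Factorial_Ring.prime (H.ord b)"
  shows "(cyc_adj (G \<times>\<times> H))\<^sup>*\<^sup>* (a, \<one>\<^bsub>H\<^esub>) (\<one>\<^bsub>G\<^esub>, b)"
proof -
  have ord_a: "GH.ord (a, \<one>\<^bsub>H\<^esub>) = G.ord a" and ord_b: "GH.ord (\<one>\<^bsub>G\<^esub>, b) = H.ord b"
    using ord_DirProd a(1) b(1) by simp_all
  have "cyc_adj (G \<times>\<times> H) (a, \<one>\<^bsub>H\<^esub>) (\<one>\<^bsub>G\<^esub>, b)" if "G.ord a \<noteq> H.ord b"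
    using a b that ord_a ord_b by (intro GH.cyc_adj_if_commute_distinct_prime_orders) auto
  moreover have "(cyc_adj (G \<times>\<times> H))\<^sup>*\<^sup>* (a, \<one>\<^bsub>H\<^esub>) (\<one>\<^bsub>G\<^esub>, b)" if same: "G.ord a = H.ord b"
  proof -
    have ord_ab: "GH.ord (a, b) = G.ord a"
      using ord_DirProd a(1) b(1) same by simp
    obtain y where y: "y \<in> factor_elems" "y \<otimes>\<^bsub>G \<times>\<times> H\<^esub> (a, b) = (a, b) \<otimes>\<^bsub>G \<times>\<times> H\<^esub> y"
        "Factorial_Ring.prime (GH.ord y)" "GH.ord y \<noteq> G.ord a"
      using prime_order_commutes_with_factor_elem[of "(a, b)"] a b ord_ab by auto
    have "y \<in> carrier (G \<times>\<times> H)" using y(1) by (auto simp: factor_elems_def)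
    have "cyc_adj (G \<times>\<times> H) (a, \<one>\<^bsub>H\<^esub>) y"
      using factor_elem_commutes_with_components(1)[OF y(1) a(1) b(1) y(2)] y(3,4)
        \<open>y \<in> carrier (G \<times>\<times> H)\<close> a ord_a
      by (intro GH.cyc_adj_if_commute_distinct_prime_orders) auto
    moreover have "cyc_adj (G \<times>\<times> H) y (\<one>\<^bsub>G\<^esub>, b)"
      using factor_elem_commutes_with_components(2)[OF y(1) a(1) b(1) y(2)] y(3,4)
        \<open>y \<in> carrier (G \<times>\<times> H)\<close> b ord_b same
      by (intro GH.cyc_adj_if_commute_distinct_prime_orders) auto
    ultimately show ?thesis by auto
  qed
  ultimately show ?thesis by (cases "G.ord a = H.ord b") auto
qed

lemma factor_elem_connected_to:
  assumes g0: "g0 \<in> carrier G" "Factorial_Ring.prime (G.ord g0)"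
    and h0: "h0 \<in> carrier H" "Factorial_Ring.prime (H.ord h0)"
    and y: "y \<in> factor_elems" "Factorial_Ring.prime (GH.ord y)"
  shows "(cyc_adj (G \<times>\<times> H))\<^sup>*\<^sup>* y (g0, \<one>\<^bsub>H\<^esub>)"
proof -
  consider a where "a \<in> carrier G" "y = (a, \<one>\<^bsub>H\<^esub>)" | b where "b \<in> carrier H" "y = (\<one>\<^bsub>G\<^esub>, b)"
    using y(1) by (auto simp: factor_elems_def)
  then show ?thesis
  proof cases
    case (1 a)
    then have "Factorial_Ring.prime (G.ord a)" using y(2) ord_DirProd by simp
    then have "(cyc_adj (G \<times>\<times> H))\<^sup>*\<^sup>* y (\<one>\<^bsub>G\<^esub>, h0)"
      using cross_factor_connected 1 h0 by simp
    moreover have "(cyc_adj (G \<times>\<times> H))\<^sup>*\<^sup>* (\<one>\<^bsub>G\<^esub>, h0) (g0, \<one>\<^bsub>H\<^esub>)"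
      using GH.cyc_connected_sym cross_factor_connected g0 h0 by blast
    ultimately show ?thesis by (rule rtranclp_trans)
  next
    case (2 b)
    then have "Factorial_Ring.prime (H.ord b)" using y(2) ord_DirProd by simp
    then show ?thesis using GH.cyc_connected_sym cross_factor_connected 2 g0 by blast
  qed
qed

lemma connected_if_no_p_centralizer:
  assumes nontrivial: "carrier G \<noteq> {\<one>\<^bsub>G\<^esub>}" "carrier H \<noteq> {\<one>\<^bsub>H\<^esub>}"
  shows "cyc_graph_connected (G \<times>\<times> H)"
proof -
  let ?conn = "(cyc_adj (G \<times>\<times> H))\<^sup>*\<^sup>*"
  obtain g0 where g0: "g0 \<in> carrier G" "Factorial_Ring.prime (G.ord g0)"
    using nontrivial(1) G.one_closed G.cyc_connected_to_prime_order[OF fin_G] by blast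
  obtain h0 where h0: "h0 \<in> carrier H" "Factorial_Ring.prime (H.ord h0)"
    using nontrivial(2) H.one_closed H.cyc_connected_to_prime_order[OF fin_H] by blast
  have to_base: "?conn v (g0, \<one>\<^bsub>H\<^esub>)" if v: "v \<in> cyc_vertices (G \<times>\<times> H)" for v
  proof -
    have "v \<in> carrier (G \<times>\<times> H)" "v \<noteq> \<one>\<^bsub>G \<times>\<times> H\<^esub>"
      using v unfolding cyc_vertices_def by blast+
    then obtain x where x: "x \<in> carrier (G \<times>\<times> H)" "Factorial_Ring.prime (GH.ord x)" "?conn v x"
      using GH.cyc_connected_to_prime_order[OF finite_carrier_DirProd] by blast
    obtain y where y: "y \<in> factor_elems" "y \<otimes>\<^bsub>G \<times>\<times> H\<^esub> x = x \<otimes>\<^bsub>G \<times>\<times> H\<^esub> y"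
        "Factorial_Ring.prime (GH.ord y)" "GH.ord y \<noteq> GH.ord x"
      using prime_order_commutes_with_factor_elem[OF x(1,2)] by blast
    have "y \<in> carrier (G \<times>\<times> H)" using y(1) by (auto simp: factor_elems_def)
    then have "cyc_adj (G \<times>\<times> H) x y"
      using x y by (intro GH.cyc_adj_if_commute_distinct_prime_orders) auto
    then show ?thesis
      using x(3) factor_elem_connected_to[OF g0 h0 y(1,3)] by (meson rtranclp.rtrancl_into_rtrancl rtranclp_trans)
  qed
  show ?thesis
    unfolding cyc_graph_connected_def
    using to_base GH.cyc_connected_sym by (meson rtranclp_trans)
qed

end

end

end

theorem theorem4p4:
  fixes G :: "('a, 'c) monoid_scheme" and H :: "('b, 'd) monoid_scheme"
  assumes "group G" and "group H"
    and "finite (carrier G)" and "finite (carrier H)"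
    and "carrier G \<noteq> {\<one>\<^bsub>G\<^esub>}" and "carrier H \<noteq> {\<one>\<^bsub>H\<^esub>}"
  shows "\<not> cyc_graph_connected (G \<times>\<times> H) \<longleftrightarrow>
    (\<exists>p x. Factorial_Ring.prime (p::nat) \<and> x \<in> carrier (G \<times>\<times> H) \<and> group.ord (G \<times>\<times> H) x = p
       \<and> is_p_group p (centralizer_of (G \<times>\<times> H) x))"
proof -
  interpret group_pair G H by (rule group_pair.intro) fact+
  show ?thesis
  proof
    assume "\<not> cyc_graph_connected (G \<times>\<times> H)"
    then show "\<exists>p x. Factorial_Ring.prime p \<and> x \<in> carrier (G \<times>\<times> H) \<and> GH.ord x = p
       \<and> is_p_group p (centralizer_of (G \<times>\<times> H) x)"
      using connected_if_no_p_centralizer[OF assms(3,4) _ assms(5,6)] by blast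
  next
    assume "\<exists>p x. Factorial_Ring.prime p \<and> x \<in> carrier (G \<times>\<times> H) \<and> GH.ord x = p
       \<and> is_p_group p (centralizer_of (G \<times>\<times> H) x)"
    then show "\<not> cyc_graph_connected (G \<times>\<times> H)"
      using not_connected_if_p_centralizer[OF assms(3-6)] by blast
  qed
qed

end
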